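(* Let $P,Q$ be distributions over pairs $x=(x_1,x_2)$ with $x_1\in\{1,\dots,r_1\}$ and $x_2\in\{1,\dots,r_2\}$, and assume $P(x_i=t)>0$ for all $i\in\{1,2\}$, $t\in\{1,\dots,r_i\}$. Let $\mathcal{F}=\{f_1(x_1)+f_2(x_2)\}$ where $f_i:\{1,\dots,r_i\}\to\mathbb{R}$ are arbitrary functions. Then $$\tau(P,Q,\mathcal{F})\le \frac{2}{\lambda_2(\bar K_P)}\max_{i\in\{1,2\},\,t\in\{1,\dots,r_i\}}\frac{Q(x_i=t)}{P(x_i=t)}$$ (interpreted as $+\infty$ if $\lambda_2(\bar K_P)=0$).
   Context: $\tau(P,Q,\mathcal{F})=\sup_{f,g\in\mathcal{F}}\mathbb{E}_Q[(f(x)-g(x))^2]/\mathbb{E}_P[(f(x)-g(x))^2]$ with the convention $0/0=0$. Identify $P$ with the $r_1\times r_2$ matrix $[P]_{a,b}=P(x_1=a,x_2=b)$; let $D_1=\mathrm{diag}(P(x_1=1),\dots,P(x_1=r_1))$ and $D_2=\mathrm{diag}(P(x_2=1),\dots,P(x_2=r_2))$ (row and column sums of $P$). The signless Laplacian of $P$ is the $(r_1+r_2)\times(r_1+r_2)$ matrix $$K_P=\begin{pmatrix}D_1 & P\\ P^\top & D_2\end{pmatrix},$$ and the normalized signless Laplacian is $\bar K_P=\mathrm{diag}(K_P)^{-1/2}K_P\,\mathrm{diag}(K_P)^{-1/2}$, where $\mathrm{diag}(K_P)$ is $K_P$ with all off-diagonal entries set to zero. For a symmetric matrix $M$, $\lambda_1(M)\le\lambda_2(M)\le\cdots$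 are its eigenvalues in ascending order. *)

theory Defs
  imports "Jordan_Normal_Form.Char_Poly" "HOL-Library.Extended_Real"
begin

text \<open>Distributions over pairs (x1,x2) with x1 in {0..<r1}, x2 in {0..<r2}
 (0-based indices), given as probability mass functions.\<close>
definition is_pair_dist :: "nat \<Rightarrow> nat \<Rightarrow> (nat \<Rightarrow> nat \<Rightarrow> real) \<Rightarrow> bool" where
  "is_pair_dist r1 r2 P \<longleftrightarrow>
     (\<forall>a<r1. \<forall>b<r2. 0 \<le> P a b) \<and> (\<Sum>a<r1. \<Sum>b<r2. P a b) = 1"

definition expect :: "nat \<Rightarrow> nat \<Rightarrow> (nat \<Rightarrow> nat \<Rightarrow> real) \<Rightarrow> (nat \<Rightarrow> nat \<Rightarrow> real) \<Rightarrow> real" where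
  "expect r1 r2 P h = (\<Sum>a<r1. \<Sum>b<r2. P a b * h a b)"

definition marg1 :: "nat \<Rightarrow> (nat \<Rightarrow> nat \<Rightarrow> real) \<Rightarrow> nat \<Rightarrow> real" where
  "marg1 r2 P a = (\<Sum>b<r2. P a b)"

definition marg2 :: "nat \<Rightarrow> (nat \<Rightarrow> nat \<Rightarrow> real) \<Rightarrow> nat \<Rightarrow> real" where
  "marg2 r1 P b = (\<Sum>a<r1. P a b)"

definition additive_class :: "(nat \<Rightarrow> nat \<Rightarrow> real) set" where
  "additive_class = {h. \<exists>f1 f2 :: nat \<Rightarrow> real. h = (\<lambda>a b. f1 a + f2 b)}"

definition eratio :: "real \<Rightarrow> real \<Rightarrow> ereal" where
  "eratio q p = (if p = 0 then (if q = 0 then 0 else \<infinity>) else ereal (q / p))"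

definition tau :: "nat \<Rightarrow> nat \<Rightarrow> (nat \<Rightarrow> nat \<Rightarrow> real) \<Rightarrow> (nat \<Rightarrow> nat \<Rightarrow> real)
                     \<Rightarrow> (nat \<Rightarrow> nat \<Rightarrow> real) set \<Rightarrow> ereal" where
  "tau r1 r2 P Q F = (SUP fg \<in> F \<times> F.
      eratio (expect r1 r2 Q (\<lambda>a b. (fst fg a b - snd fg a b)^2))
             (expect r1 r2 P (\<lambda>a b. (fst fg a b - snd fg a b)^2)))"

definition pair_mat :: "nat \<Rightarrow> nat \<Rightarrow> (nat \<Rightarrow> nat \<Rightarrow> real) \<Rightarrow> real mat" where
  "pair_mat r1 r2 P = mat r1 r2 (\<lambda>(a, b). P a b)"

definition signless_laplacian :: "nat \<Rightarrow> nat \<Rightarrow> (nat \<Rightarrow> nat \<Rightarrow> real) \<Rightarrow> real mat" where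
  "signless_laplacian r1 r2 P =
     four_block_mat (mat_diag r1 (marg1 r2 P)) (pair_mat r1 r2 P)
                    (transpose_mat (pair_mat r1 r2 P)) (mat_diag r2 (marg2 r1 P))"

definition normalized :: "real mat \<Rightarrow> real mat" where
  "normalized K = (let Dh = mat_diag (dim_row K) (\<lambda>i. 1 / sqrt (K $$ (i, i))) in Dh * K * Dh)"

text \<open>Eigenvalues (roots of the characteristic polynomial, with multiplicity) in ascending
 order; lambda_k is the k-th one (1-based).\<close>
definition eigs_asc :: "real mat \<Rightarrow> real list" where
  "eigs_asc A = sorted_list_of_multiset (proots (char_poly A))"

definition eig_lambda :: "nat \<Rightarrow> real mat \<Rightarrow> real" where
  "eig_lambda k A = eigs_asc A ! (k - 1)"

end

theory Submission
  imports Defs "Jordan_Normal_Form.Schur_Decomposition"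
begin

text \<open>In the coordinates $y = D^{1/2}(u, v)$, with $D = \mathrm{diag}(K_P)$, the quadratic form of
  $\bar K_P$ is $E_P[(u(x_1) + v(x_2))^2]$ and $\|y\|^2 = \sum_a P(x_1 = a)\, u_a^2 + \sum_b P(x_2 = b)\, v_b^2$.
  Hence $\bar K_P$ is positive semidefinite and $D^{1/2}(1, -1)$ lies in the kernel of its form.
  The difference of two members of $\mathcal F$ is $u(x_1) + v(x_2)$, which is unchanged by the shift
  $(u + t, v - t)$; choosing $t$ so that $y$ is orthogonal to the bottom eigenvector gives the
  Poincar\'e inequality $\lambda_2 \|y\|^2 \le E_P[(u + v)^2]$. On the other side
  $(u + v)^2 \le 2u^2 + 2v^2$ bounds $E_Q[(u + v)^2]$ by twice the marginal energies under $Q$,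
  and these are at most $\max_{i,t} Q(x_i = t)/P(x_i = t)$ times those under $P$.\<close>

section \<open>Spectral theorem for real symmetric matrices\<close>

text \<open>The library's \<open>orthogonal_mat\<close> only asks for pairwise orthogonal columns.\<close>

definition orthonormal_mat :: "nat \<Rightarrow> real mat \<Rightarrow> bool" where
  "orthonormal_mat n U \<longleftrightarrow> U \<in> carrier_mat n n \<and> U\<^sup>T * U = 1\<^sub>m n"

lemma orthonormal_matD:
  assumes "orthonormal_mat n U"
  shows "U \<in> carrier_mat n n" "U\<^sup>T * U = 1\<^sub>m n" "U * U\<^sup>T = 1\<^sub>m n"
  using assms mat_mult_left_right_inverse[of "U\<^sup>T" n U] unfolding orthonormal_mat_def by auto

lemma orthonormal_mat_mult:
  assumes U: "orthonormal_mat n U" and V: "orthonormal_mat n V"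
  shows "orthonormal_mat n (U * V)"
proof -
  note UV = orthonormal_matD[OF U] orthonormal_matD[OF V]
  have T: "(U * V)\<^sup>T = V\<^sup>T * U\<^sup>T"
    by (rule transpose_mult[of _ n n], insert UV, auto)
  have "(U * V)\<^sup>T * (U * V) = V\<^sup>T * (U\<^sup>T * U) * V"
    unfolding T using UV(1,4) by (simp add: assoc_mult_mat[of _ n n _ n _ n])
  also have "\<dots> = 1\<^sub>m n" unfolding UV(2) using UV by simp
  finally show ?thesis using UV unfolding orthonormal_mat_def by auto
qed

lemma mult_four_block_diag_mat:
  assumes "A1 \<in> carrier_mat a a" "D1 \<in> carrier_mat b b" "A2 \<in> carrier_mat a a" "D2 \<in> carrier_mat b b"
  shows "four_block_mat A1 (0\<^sub>m a b) (0\<^sub>m b a) D1 * four_block_mat A2 (0\<^sub>m a b) (0\<^sub>m b a) D2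
    = four_block_mat (A1 * A2) (0\<^sub>m a b) (0\<^sub>m b a) (D1 * D2 :: 'x :: comm_ring_1 mat)"
  by (subst mult_four_block_mat[OF assms(1) zero_carrier_mat zero_carrier_mat assms(2)
     assms(3) zero_carrier_mat zero_carrier_mat assms(4)], insert assms, simp)

lemma orthonormal_mat_four_block_diag:
  assumes U: "orthonormal_mat m U"
  shows "orthonormal_mat (Suc m) (four_block_mat (1\<^sub>m 1) (0\<^sub>m 1 m) (0\<^sub>m m 1) U)"
proof -
  note U = orthonormal_matD[OF U]
  have "(four_block_mat (1\<^sub>m 1) (0\<^sub>m 1 m) (0\<^sub>m m 1) U)\<^sup>T
      = four_block_mat (1\<^sub>m 1) (0\<^sub>m 1 m) (0\<^sub>m m 1) U\<^sup>T"
    using U by (subst transpose_four_block_mat, auto)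
  with U show ?thesis unfolding orthonormal_mat_def
    by (auto simp: mult_four_block_diag_mat four_block_one_mat[of 1 m, simplified])
qed

lemma real_scalar_prod_self_nonneg: "(u :: real vec) \<bullet> u \<ge> 0"
  unfolding scalar_prod_def by (intro sum_nonneg, auto)

lemma real_scalar_prod_self_eq_0_iff:
  assumes "(u :: real vec) \<in> carrier_vec n"
  shows "u \<bullet> u = 0 \<longleftrightarrow> u = 0\<^sub>v n"
proof -
  have "conjugate u = u" by (intro eq_vecI, auto)
  with conjugate_square_eq_0_vec[OF assms] show ?thesis by (simp add: scalar_prod_def)
qed

lemma orthonormal_mat_normalized_cols:
  fixes ws :: "real vec list"
  assumes ws: "set ws \<subseteq> carrier_vec n" "length ws = n" and orth: "corthogonal ws"
  shows "orthonormal_mat n (mat n n (\<lambda>(i,j). ws ! j $ i / sqrt (ws ! j \<bullet> ws ! j)))"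
proof -
  have wsi: "ws ! i \<in> carrier_vec n" if "i < n" for i using ws that by auto
  have orth: "ws ! i \<bullet> ws ! j = 0 \<longleftrightarrow> i \<noteq> j" if "i < n" "j < n" for i j
    using corthogonalD[OF orth, of i j] that ws by simp
  define nr where "nr i = sqrt (ws ! i \<bullet> ws ! i)" for i
  have nrpos: "nr i > 0" if "i < n" for i
    using orth[OF that that] real_scalar_prod_self_nonneg[of "ws ! i"] unfolding nr_def by auto
  define W where "W = mat n n (\<lambda>(i,j). ws ! j $ i / nr j)"
  have W: "W \<in> carrier_mat n n" unfolding W_def by auto
  have "W\<^sup>T * W = 1\<^sub>m n"
  proof (rule eq_matI)
    fix i j assume "i < dim_row (1\<^sub>m n :: real mat)" and "j < dim_col (1\<^sub>m n :: real mat)"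
    hence i: "i < n" and j: "j < n" by auto
    have "(W\<^sup>T * W) $$ (i,j) = (ws ! i \<bullet> ws ! j) / (nr i * nr j)"
      using i j W wsi[OF i] wsi[OF j] unfolding W_def
      by (simp add: scalar_prod_def sum_divide_distrib)
    also have "\<dots> = 1\<^sub>m n $$ (i,j)"
    proof (cases "i = j")
      case True
      have "ws ! i \<bullet> ws ! i = nr i * nr i" unfolding nr_def
        using real_scalar_prod_self_nonneg[of "ws ! i"] by simp
      thus ?thesis using True i nrpos[OF i] by simp
    next
      case False thus ?thesis using orth[OF i j] i j by simp
    qed
    finally show "(W\<^sup>T * W) $$ (i,j) = 1\<^sub>m n $$ (i,j)" .
  qed (insert W, auto)
  with W show ?thesis unfolding orthonormal_mat_def W_def nr_def by blast
qed

lemma orthonormal_mat_first_col: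
  fixes v :: "real vec"
  assumes v: "v \<in> carrier_vec n" and v0: "v \<noteq> 0\<^sub>v n"
  shows "\<exists>W c. orthonormal_mat n W \<and> col W 0 = c \<cdot>\<^sub>v v"
proof -
  interpret cof_vec_space n "TYPE(real)" .
  from basis_completion[OF v v0]
  have bdist: "distinct (basis_completion v)" and bind: "\<not> lin_dep (set (basis_completion v))"
    and bcar: "set (basis_completion v) \<subseteq> carrier_vec n"
    and bhd: "hd (basis_completion v) = v" and blen: "length (basis_completion v) = n" by auto
  have "n \<noteq> 0" using v v0 by (intro notI, auto intro!: eq_vecI)
  with bhd blen obtain vs where bv: "basis_completion v = v # vs" by (cases "basis_completion v", auto)
  define ws where "ws = gram_schmidt n (basis_completion v)"
  from gram_schmidt_result[OF bcar bdist bind ws_def]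
  have wsc: "set ws \<subseteq> carrier_vec n" and wso: "corthogonal ws" and wsl: "length ws = n"
    using blen by auto
  have ws0: "ws ! 0 = v" using gram_schmidt_hd[OF v, of vs] bv wsl \<open>n \<noteq> 0\<close> unfolding ws_def
    by (metis hd_conv_nth length_0_conv)
  have "col (mat n n (\<lambda>(i,j). ws ! j $ i / sqrt (ws ! j \<bullet> ws ! j))) 0 = (1 / sqrt (v \<bullet> v)) \<cdot>\<^sub>v v"
    using v ws0 \<open>n \<noteq> 0\<close> by (intro eq_vecI, auto)
  with orthonormal_mat_normalized_cols[OF wsc wsl wso] show ?thesis by blast
qed

lemma symmetric_eigenvalue_real:
  fixes A :: "real mat"
  assumes A: "A \<in> carrier_mat n n" and sym: "A\<^sup>T = A"
    and ev: "eigenvector (map_mat complex_of_real A) v a"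
  shows "a = complex_of_real (Re a)"
proof -
  let ?M = "map_mat complex_of_real A"
  have symij: "A $$ (i,j) = A $$ (j,i)" if "i < n" "j < n" for i j
    using arg_cong[OF sym, of "\<lambda>M. M $$ (i,j)"] that A by simp
  from ev have v: "v \<in> carrier_vec n" "v \<noteq> 0\<^sub>v n" "?M *\<^sub>v v = a \<cdot>\<^sub>v v"
    unfolding eigenvector_def using A by auto
  define N where "N = (\<Sum>i<n. cnj (v$i) * v$i)"
  define s where "s = (\<Sum>i<n. \<Sum>j<n. cnj (v$i) * (of_real (A$$(i,j)) * v$j))"
  have Mv: "(?M *\<^sub>v v)$i = (\<Sum>j<n. of_real (A$$(i,j)) * v$j)" if "i<n" for i
    using A v(1) that by (auto simp: scalar_prod_def lessThan_atLeast0 intro!: sum.cong)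
  have "s = (\<Sum>i<n. cnj (v$i) * (?M *\<^sub>v v)$i)"
    unfolding s_def by (auto simp: Mv sum_distrib_left)
  also have "\<dots> = a * N" unfolding v(3) N_def using v
    by (auto simp: sum_distrib_left intro!: sum.cong)
  finally have sN: "s = a * N" .
  have "cnj s = (\<Sum>i<n. \<Sum>j<n. v$i * (of_real (A$$(i,j)) * cnj (v$j)))"
    unfolding s_def by simp
  also have "\<dots> = (\<Sum>j<n. \<Sum>i<n. v$i * (of_real (A$$(i,j)) * cnj (v$j)))"
    by (rule sum.swap)
  also have "\<dots> = s" unfolding s_def
    by (intro sum.cong refl, subst symij, auto simp: ac_simps)
  finally have cs: "cnj s = s" .
  have Nr: "N = of_real (\<Sum>i<n. (cmod (v$i))^2)"
    unfolding N_def of_real_sum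
    by (intro sum.cong refl) (simp add: complex_norm_square[symmetric] mult.commute)
  have "N \<noteq> 0"
  proof
    assume "N = 0"
    hence "(\<Sum>i<n. (cmod (v$i))^2) = 0" unfolding Nr of_real_eq_0_iff .
    hence "\<forall>i\<in>{..<n}. (cmod (v$i))^2 = 0"
      by (subst sum_nonneg_eq_0_iff[symmetric], auto)
    hence "v = 0\<^sub>v n" using v(1) by (intro eq_vecI, auto)
    with v(2) show False by simp
  qed
  have "cnj a = a" using sN cs \<open>N \<noteq> 0\<close> unfolding Nr by (simp add: divide_simps)
  thus ?thesis by (simp add: complex_eq_iff)
qed

interpretation of_real_poly: map_poly_inj_idom_hom "of_real :: real \<Rightarrow> complex" ..

lemma char_poly_symmetric_linear_factors:
  fixes A :: "real mat"
  assumes A: "A \<in> carrier_mat n n" and sym: "A\<^sup>T = A"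
  shows "\<exists>es. char_poly A = (\<Prod>e\<leftarrow>es. [:-e,1:])"
proof -
  let ?M = "map_mat complex_of_real A"
  have M: "?M \<in> carrier_mat n n" using A by auto
  from char_poly_factorized[OF M] obtain as where cM: "char_poly ?M = (\<Prod>a\<leftarrow>as. [:-a,1:])"
    by auto
  have re: "a = complex_of_real (Re a)" if a: "a \<in> set as" for a
  proof -
    have "poly (char_poly ?M) a = 0" unfolding cM using a by (rule linear_poly_root)
    hence "eigenvalue ?M a" using eigenvalue_root_char_poly[OF M] by simp
    then obtain v where "eigenvector ?M v a" unfolding eigenvalue_def by auto
    from symmetric_eigenvalue_real[OF A sym this] show ?thesis .
  qed
  have "map_poly complex_of_real (\<Prod>e\<leftarrow>map Re as. [:-e,1:]) = (\<Prod>a\<leftarrow>as. [:-a,1:])"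
    using re
  proof (induct as)
    case (Cons a as)
    hence "[:- a, 1:] = map_poly complex_of_real [:-Re a,1:]"
      by (simp add: of_real_hom.map_poly_pCons_hom)
    with Cons show ?case unfolding list.map prod_list.Cons of_real_poly.hom_mult by simp
  qed simp
  also have "\<dots> = map_poly complex_of_real (char_poly A)"
    using cM of_real_hom.char_poly_hom[OF A] by metis
  finally show ?thesis unfolding of_real_poly.eq_iff by (intro exI[of _ "map Re as"], simp)
qed

text \<open>Conjugating by an orthonormal matrix whose first column is an eigenvector splits off
  a $1 \times 1$ block; symmetry makes the off-diagonal row vanish as well.\<close>

lemma symmetric_deflation:
  fixes A W :: "real mat"
  assumes A: "A \<in> carrier_mat (Suc m) (Suc m)" and sym: "A\<^sup>T = A"
    and W: "orthonormal_mat (Suc m) W" and ev: "A *\<^sub>v col W 0 = e \<cdot>\<^sub>v col W 0"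
  shows "\<exists>B \<in> carrier_mat m m. B\<^sup>T = B \<and>
    W\<^sup>T * A * W = four_block_mat (mat 1 1 (\<lambda>_. e)) (0\<^sub>m 1 m) (0\<^sub>m m 1) B"
proof -
  define n where "n = Suc m"
  note W = orthonormal_matD[OF W, folded n_def]
  have A: "A \<in> carrier_mat n n" using A unfolding n_def .
  define A' where "A' = W\<^sup>T * A * W"
  have A': "A' \<in> carrier_mat n n" unfolding A'_def using A W by auto
  have "A'\<^sup>T = W\<^sup>T * (W\<^sup>T * A)\<^sup>T" unfolding A'_def
    by (rule transpose_mult[of _ n n], insert A W, auto)
  also have "(W\<^sup>T * A)\<^sup>T = A\<^sup>T * W"
    by (subst transpose_mult[of _ n n], insert A W, auto)
  finally have symA': "A'\<^sup>T = A'"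
    unfolding A'_def sym using A W by (simp add: assoc_mult_mat[of _ n n _ n _ n])
  have A'sym: "A' $$ (i,j) = A' $$ (j,i)" if "i < n" "j < n" for i j
    using arg_cong[OF symA', of "\<lambda>M. M $$ (i,j)"] that A' by simp
  have A'0: "A' $$ (i,0) = (if i = 0 then e else 0)" if i: "i < n" for i
  proof -
    have "col (A * W) 0 = e \<cdot>\<^sub>v col W 0"
      using col_mult2[OF A W(1), of 0] ev unfolding n_def by simp
    hence "A' $$ (i,0) = row W\<^sup>T i \<bullet> (e \<cdot>\<^sub>v col W 0)" unfolding A'_def
      using A W i unfolding n_def by (simp add: assoc_mult_mat[of _ "Suc m" "Suc m" _ "Suc m" _ "Suc m"])
    also have "\<dots> = e * (W\<^sup>T * W) $$ (i,0)" using W(1) i unfolding n_def by simp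
    finally show ?thesis unfolding W(2) using i unfolding n_def by simp
  qed
  define B where "B = mat m m (\<lambda>(i,j). A' $$ (Suc i, Suc j))"
  have B: "B \<in> carrier_mat m m" unfolding B_def by auto
  have "B\<^sup>T = B" using A'sym unfolding B_def n_def by (intro eq_matI, auto)
  moreover have "A' = four_block_mat (mat 1 1 (\<lambda>_. e)) (0\<^sub>m 1 m) (0\<^sub>m m 1) B"
  proof (rule eq_matI)
    fix i j assume "i < dim_row (four_block_mat (mat 1 1 (\<lambda>_. e)) (0\<^sub>m 1 m) (0\<^sub>m m 1) B)"
      "j < dim_col (four_block_mat (mat 1 1 (\<lambda>_. e)) (0\<^sub>m 1 m) (0\<^sub>m m 1) B)"
    hence i: "i < n" and j: "j < n" using B unfolding n_def by auto
    show "A' $$ (i,j) = four_block_mat (mat 1 1 (\<lambda>_. e)) (0\<^sub>m 1 m) (0\<^sub>m m 1) B $$ (i,j)"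
      using i j B A'0[OF i] A'0[OF j] A'sym[OF i j] unfolding B_def n_def
      by (cases i; cases j; auto)
  qed (insert A' B, auto simp: n_def)
  ultimately show ?thesis using B unfolding A'_def by blast
qed

lemma char_poly_orthonormal_conj_four_block:
  fixes A W B :: "real mat"
  assumes A: "A \<in> carrier_mat (Suc m) (Suc m)" and W: "orthonormal_mat (Suc m) W"
    and B: "B \<in> carrier_mat m m"
    and WAW: "W\<^sup>T * A * W = four_block_mat (mat 1 1 (\<lambda>_. e)) (0\<^sub>m 1 m) (0\<^sub>m m 1) B"
  shows "char_poly A = [:-e, 1:] * char_poly B"
proof -
  note Wm = orthonormal_matD[OF W]
  have "similar_mat (W\<^sup>T * A * W) A"
    unfolding similar_mat_def similar_mat_wit_def Let_def
    by (intro exI[of _ "W\<^sup>T"] exI[of _ W], insert A Wm, auto)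
  from char_poly_similar[OF this, symmetric]
  have "char_poly A = char_poly (four_block_mat (mat 1 1 (\<lambda>_. e)) (0\<^sub>m 1 m) (0\<^sub>m m 1) B)"
    unfolding WAW .
  also have "\<dots> = char_poly (mat 1 1 (\<lambda>_. e)) * char_poly B"
    by (rule char_poly_four_block_zeros_col[OF _ _ B], auto)
  also have "char_poly (mat 1 1 (\<lambda>_. e)) = [:-e, 1:]"
    by (simp add: char_poly_defs det_def sign_def)
  finally show ?thesis .
qed

lemma orthonormal_mat_conj_eq:
  fixes A W X D :: "real mat"
  assumes W: "orthonormal_mat n W" and A: "A \<in> carrier_mat n n"
    and X: "X \<in> carrier_mat n n" and D: "D \<in> carrier_mat n n"
    and eq: "X * D * X\<^sup>T = W\<^sup>T * A * W"
  shows "A = (W * X) * D * (W * X)\<^sup>T"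
proof -
  note Wm = orthonormal_matD[OF W]
  have cars: "W\<^sup>T \<in> carrier_mat n n" "X\<^sup>T \<in> carrier_mat n n" using Wm X by auto
  note simps = assoc_mult_mat[of _ n n _ n _ n] Wm(1) X A D cars mult_carrier_mat[of _ n n _ n]
  have T: "(W * X)\<^sup>T = X\<^sup>T * W\<^sup>T" by (rule transpose_mult[of _ n n], insert Wm X, auto)
  have "W * X * D * (W * X)\<^sup>T = W * (X * D * X\<^sup>T) * W\<^sup>T" unfolding T by (simp add: simps)
  also have "\<dots> = (W * W\<^sup>T) * A * (W * W\<^sup>T)" unfolding eq by (simp add: simps)
  also have "\<dots> = A" unfolding Wm(3) using A by simp
  finally show ?thesis by simp
qed

theorem symmetric_orthonormal_diagonalization:
  fixes A :: "real mat"
  assumes "A \<in> carrier_mat n n" "A\<^sup>T = A" "char_poly A = (\<Prod>e\<leftarrow>es. [:-e,1:])"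
  shows "\<exists>U. orthonormal_mat n U \<and> A = U * mat_diag n (\<lambda>i. es ! i) * U\<^sup>T"
  using assms
proof (induct n arbitrary: A es)
  case 0
  show ?case by (intro exI[of _ "1\<^sub>m 0"], insert 0, auto intro!: eq_matI simp: orthonormal_mat_def)
next
  case (Suc m A es)
  define n where "n = Suc m"
  have A: "A \<in> carrier_mat n n" and symA: "A\<^sup>T = A" and cA: "char_poly A = (\<Prod>e\<leftarrow>es. [:-e,1:])"
    using Suc(2-4) unfolding n_def by auto
  have "length es = n"
    using degree_monic_char_poly[OF A] degree_linear_factors[of uminus es] cA by simp
  then obtain e es' where es: "es = e # es'" unfolding n_def by (cases es, auto)
  have "eigenvalue A e"
    unfolding eigenvalue_root_char_poly[OF A] cA es by (rule linear_poly_root, simp)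
  then obtain v where "eigenvector A v e" unfolding eigenvalue_def by auto
  hence v: "v \<in> carrier_vec n" "v \<noteq> 0\<^sub>v n" and Av: "A *\<^sub>v v = e \<cdot>\<^sub>v v"
    unfolding eigenvector_def using A by auto
  from orthonormal_mat_first_col[OF v] obtain W c where W: "orthonormal_mat n W"
    and Wv: "col W 0 = c \<cdot>\<^sub>v v" by blast
  have "A *\<^sub>v col W 0 = e \<cdot>\<^sub>v col W 0"
    unfolding Wv using A v Av by (simp add: mult_mat_vec smult_smult_assoc mult.commute)
  from symmetric_deflation[OF Suc(2,3) W[unfolded n_def] this[unfolded n_def]] obtain B
    where B: "B \<in> carrier_mat m m" and symB: "B\<^sup>T = B"
      and WAW: "W\<^sup>T * A * W = four_block_mat (mat 1 1 (\<lambda>_. e)) (0\<^sub>m 1 m) (0\<^sub>m m 1) B" by blast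
  have "[:-e,1:] * char_poly B = [:-e,1:] * (\<Prod>e\<leftarrow>es'. [:-e,1:])"
    using char_poly_orthonormal_conj_four_block[OF Suc(2) W[unfolded n_def] B WAW] cA
    unfolding es by simp
  hence "char_poly B = (\<Prod>e\<leftarrow>es'. [:-e,1:])" by (metis mult_left_cancel pCons_eq_0_iff one_neq_zero)
  from Suc(1)[OF B symB this] obtain V where V: "orthonormal_mat m V"
    and BV: "B = V * mat_diag m (\<lambda>i. es' ! i) * V\<^sup>T" by auto
  define X where "X = four_block_mat (1\<^sub>m 1) (0\<^sub>m 1 m) (0\<^sub>m m 1) V"
  have X: "orthonormal_mat n X" unfolding X_def n_def by (rule orthonormal_mat_four_block_diag[OF V])
  note Vm = orthonormal_matD[OF V] and Xm = orthonormal_matD[OF X]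
  have XT: "X\<^sup>T = four_block_mat (1\<^sub>m 1) (0\<^sub>m 1 m) (0\<^sub>m m 1) V\<^sup>T"
    unfolding X_def using Vm by (subst transpose_four_block_mat, auto)
  define D where "D = mat_diag n (\<lambda>i. es ! i)"
  have D: "D \<in> carrier_mat n n" unfolding D_def by auto
  have Dblock: "D = four_block_mat (mat 1 1 (\<lambda>_. e)) (0\<^sub>m 1 m) (0\<^sub>m m 1) (mat_diag m (\<lambda>i. es' ! i))"
    unfolding D_def n_def es by (intro eq_matI, auto simp: mat_diag_def)
  have XDX: "X * D * X\<^sup>T = W\<^sup>T * A * W"
    unfolding Dblock XT WAW BV unfolding X_def using Vm(1)
    by (subst mult_four_block_diag_mat, auto, subst mult_four_block_diag_mat, auto)
  show ?case
    using orthonormal_mat_mult[OF W X] orthonormal_mat_conj_eq[OF W A Xm(1) D XDX]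
    unfolding D_def n_def by metis
qed

lemma eigs_asc_symmetric:
  fixes A :: "real mat"
  assumes A: "A \<in> carrier_mat n n" and sym: "A\<^sup>T = A"
  shows "length (eigs_asc A) = n" and "sorted (eigs_asc A)"
    and "\<exists>U. orthonormal_mat n U \<and> A = U * mat_diag n (\<lambda>i. eigs_asc A ! i) * U\<^sup>T"
proof -
  from char_poly_symmetric_linear_factors[OF A sym]
  obtain xs where cA: "char_poly A = (\<Prod>e\<leftarrow>xs. [:-e,1:])" by auto
  have "proots (\<Prod>e\<leftarrow>xs. [:-e,1:]) = mset xs"
  proof (induct xs)
    case (Cons x xs)
    have "proots ([:-x,1:] * (\<Prod>e\<leftarrow>xs. [:-e,1:])) = proots [:-x,1:] + proots (\<Prod>e\<leftarrow>xs. [:-e,1:])"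
      by (rule proots_mult, auto)
    thus ?case using Cons by (simp add: proots_linear_factor)
  qed simp
  hence eq: "eigs_asc A = sort xs" unfolding eigs_asc_def cA by simp
  have "(\<Prod>e\<leftarrow>sort xs. [:-e,1:]) = prod_mset (image_mset (\<lambda>e. [:-e,1:]) (mset (sort xs)))"
    by (subst prod_mset_prod_list[symmetric], simp)
  also have "\<dots> = (\<Prod>e\<leftarrow>xs. [:-e,1:])"
    by (subst prod_mset_prod_list[symmetric], simp)
  finally have "(\<Prod>e\<leftarrow>sort xs. [:-e,1:]) = (\<Prod>e\<leftarrow>xs. [:-e,1:])" .
  hence cA': "char_poly A = (\<Prod>e\<leftarrow>eigs_asc A. [:-e,1:])" unfolding eq cA by simp
  show "length (eigs_asc A) = n"
    using degree_monic_char_poly[OF A] degree_linear_factors[of uminus "eigs_asc A"] cA' by simp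
  show "sorted (eigs_asc A)" unfolding eq by simp
  show "\<exists>U. orthonormal_mat n U \<and> A = U * mat_diag n (\<lambda>i. eigs_asc A ! i) * U\<^sup>T"
    by (rule symmetric_orthonormal_diagonalization[OF A sym cA'])
qed

lemma mult_delta_left: "(if b then x else 0) * y = (if b then x * y else (0 :: 'a :: mult_zero))"
  by simp

lemma mult_delta_right: "x * (if b then y else 0) = (if b then x * y else (0 :: 'a :: mult_zero))"
  by simp

lemma orthonormal_coords_norm:
  assumes U: "orthonormal_mat n U" and y: "y \<in> carrier_vec n"
  shows "(\<Sum>k<n. ((U\<^sup>T *\<^sub>v y) $ k)^2) = y \<bullet> y"
proof -
  note Um = orthonormal_matD[OF U]
  have "U *\<^sub>v (U\<^sup>T *\<^sub>v y) = (U * U\<^sup>T) *\<^sub>v y"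
    by (rule assoc_mult_mat_vec[symmetric], insert Um y, auto)
  hence "U *\<^sub>v (U\<^sup>T *\<^sub>v y) = y" unfolding Um(3) using y by simp
  hence "y \<bullet> y = (U\<^sup>T *\<^sub>v y) \<bullet> (U\<^sup>T *\<^sub>v y)"
    using transpose_vec_mult_scalar[OF Um(1), of "U\<^sup>T *\<^sub>v y" y] Um y by simp
  thus ?thesis using Um y by (simp add: scalar_prod_def lessThan_atLeast0 power2_eq_square)
qed

lemma quadratic_form_orthonormal_diag:
  assumes U: "orthonormal_mat n U" and AU: "A = U * mat_diag n (\<lambda>i. es ! i) * U\<^sup>T"
    and y: "y \<in> carrier_vec n"
  shows "y \<bullet> (A *\<^sub>v y) = (\<Sum>k<n. es ! k * ((U\<^sup>T *\<^sub>v y) $ k)^2)"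
proof -
  note Um = orthonormal_matD[OF U]
  define c where "c = U\<^sup>T *\<^sub>v y"
  define D where "D = mat_diag n (\<lambda>i. es ! i)"
  have c: "c \<in> carrier_vec n" unfolding c_def using Um y by auto
  have D: "D \<in> carrier_mat n n" unfolding D_def by auto
  have "A *\<^sub>v y = U *\<^sub>v (D *\<^sub>v c)" unfolding AU c_def D_def[symmetric] using Um D y
    by (simp add: assoc_mult_mat_vec[of _ n n _ n])
  hence "y \<bullet> (A *\<^sub>v y) = c \<bullet> (D *\<^sub>v c)"
    using transpose_vec_mult_scalar[OF Um(1), of "D *\<^sub>v c" y] D c y unfolding c_def by simp
  also have "D *\<^sub>v c = vec n (\<lambda>k. es ! k * c $ k)"
    unfolding D_def using c
    by (intro eq_vecI) (auto simp: mat_diag_def scalar_prod_def mult_delta_left sum.delta)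
  also have "c \<bullet> \<dots> = (\<Sum>k<n. es ! k * (c $ k)^2)"
    using c unfolding scalar_prod_def lessThan_atLeast0
    by (intro sum.cong) (auto simp: power2_eq_square)
  finally show ?thesis unfolding c_def .
qed

lemma symmetric_psd_eigs_asc_nonneg:
  fixes A :: "real mat"
  assumes A: "A \<in> carrier_mat n n" and sym: "A\<^sup>T = A"
    and psd: "\<And>y. y \<in> carrier_vec n \<Longrightarrow> 0 \<le> y \<bullet> (A *\<^sub>v y)" and k: "k < n"
  shows "0 \<le> eigs_asc A ! k"
proof -
  from eigs_asc_symmetric(3)[OF A sym] obtain U where U: "orthonormal_mat n U"
    and AU: "A = U * mat_diag n (\<lambda>i. eigs_asc A ! i) * U\<^sup>T" by blast
  note Um = orthonormal_matD[OF U]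
  define y where "y = U *\<^sub>v unit_vec n k"
  have y: "y \<in> carrier_vec n" unfolding y_def using Um by auto
  have "U\<^sup>T *\<^sub>v y = (U\<^sup>T * U) *\<^sub>v unit_vec n k" unfolding y_def
    by (rule assoc_mult_mat_vec[symmetric], insert Um, auto)
  hence Uy: "U\<^sup>T *\<^sub>v y = unit_vec n k" unfolding Um(2) by simp
  have "y \<bullet> (A *\<^sub>v y) = (\<Sum>j<n. eigs_asc A ! j * (unit_vec n k $ j)^2)"
    using quadratic_form_orthonormal_diag[OF U AU y] unfolding Uy .
  also have "\<dots> = (\<Sum>j<n. if j = k then eigs_asc A ! j else 0)"
    by (rule sum.cong) (auto simp: unit_vec_def)
  finally show ?thesis using psd[OF y] k by simp
qed

lemma null_vector_coords_orthonormal_diag: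
  fixes A U :: "real mat"
  assumes U: "orthonormal_mat n U" and AU: "A = U * mat_diag n (\<lambda>i. es ! i) * U\<^sup>T"
    and nonneg: "\<And>k. k < n \<Longrightarrow> 0 \<le> es ! k" and pos: "\<And>k. 1 \<le> k \<Longrightarrow> k < n \<Longrightarrow> 0 < es ! k"
    and z: "z \<in> carrier_vec n" "z \<noteq> 0\<^sub>v n" "z \<bullet> (A *\<^sub>v z) = 0"
  shows "\<And>k. 1 \<le> k \<Longrightarrow> k < n \<Longrightarrow> (U\<^sup>T *\<^sub>v z) $ k = 0" and "(U\<^sup>T *\<^sub>v z) $ 0 \<noteq> 0"
proof -
  define c0 where "c0 = U\<^sup>T *\<^sub>v z"
  have "(\<Sum>k<n. es ! k * (c0 $ k)^2) = 0"
    using quadratic_form_orthonormal_diag[OF U AU z(1)] z(3) unfolding c0_def by simp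
  hence c0_products: "\<forall>k\<in>{..<n}. es ! k * (c0 $ k)^2 = 0"
    using nonneg by (subst sum_nonneg_eq_0_iff[symmetric], auto)
  have c0k: "c0 $ k = 0" if "1 \<le> k" "k < n" for k
  proof -
    have "es ! k * (c0 $ k)^2 = 0" using c0_products that by auto
    thus ?thesis using pos[OF that] by simp
  qed
  thus "(U\<^sup>T *\<^sub>v z) $ k = 0" if "1 \<le> k" "k < n" for k using that unfolding c0_def .
  show "(U\<^sup>T *\<^sub>v z) $ 0 \<noteq> 0"
  proof
    assume "(U\<^sup>T *\<^sub>v z) $ 0 = 0"
    hence "\<forall>k<n. c0 $ k = 0" using c0k unfolding c0_def by (metis less_one not_le)
    hence "z \<bullet> z = 0" using orthonormal_coords_norm[OF U z(1)] unfolding c0_def by simp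
    with z(1,2) show False using real_scalar_prod_self_eq_0_iff by blast
  qed
qed

lemma symmetric_psd_shift_eig_lambda2:
  fixes A :: "real mat"
  assumes A: "A \<in> carrier_mat n n" and sym: "A\<^sup>T = A"
    and psd: "\<And>y. y \<in> carrier_vec n \<Longrightarrow> 0 \<le> y \<bullet> (A *\<^sub>v y)"
    and z: "z \<in> carrier_vec n" "z \<noteq> 0\<^sub>v n" "z \<bullet> (A *\<^sub>v z) = 0" and y: "y \<in> carrier_vec n"
  shows "\<exists>t. eig_lambda 2 A * ((y + t \<cdot>\<^sub>v z) \<bullet> (y + t \<cdot>\<^sub>v z))
    \<le> (y + t \<cdot>\<^sub>v z) \<bullet> (A *\<^sub>v (y + t \<cdot>\<^sub>v z))"
proof (cases "eig_lambda 2 A \<le> 0")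
  case True
  have "eig_lambda 2 A * (y \<bullet> y) \<le> 0"
    using True real_scalar_prod_self_nonneg[of y] by (simp add: mult_nonpos_nonneg)
  moreover have "y + 0 \<cdot>\<^sub>v z = y" using y z(1) by (intro eq_vecI) auto
  ultimately show ?thesis using psd[OF y] by (intro exI[of _ 0]) simp
next
  case False
  define es where "es = eigs_asc A"
  have l: "es ! 1 > 0" using False unfolding eig_lambda_def es_def by simp
  from eigs_asc_symmetric[OF A sym] obtain U where les: "length es = n" and sorted: "sorted es"
    and U: "orthonormal_mat n U" and AU: "A = U * mat_diag n (\<lambda>i. es ! i) * U\<^sup>T"
    unfolding es_def by blast
  note Um = orthonormal_matD[OF U]
  have es_ge: "es ! 1 \<le> es ! k" if "1 \<le> k" "k < n" for k
    using sorted_nth_mono[OF sorted that(1)] that les by auto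
  have es_nonneg: "0 \<le> es ! k" if "k < n" for k
    using symmetric_psd_eigs_asc_nonneg[OF A sym psd that] unfolding es_def .
  have es_pos: "0 < es ! k" if "1 \<le> k" "k < n" for k using es_ge[OF that] l by linarith
  define c0 where "c0 = U\<^sup>T *\<^sub>v z"
  have c0: "c0 \<in> carrier_vec n" unfolding c0_def using Um z by auto
  have c00: "c0 $ 0 \<noteq> 0"
    unfolding c0_def by (rule null_vector_coords_orthonormal_diag(2)[OF U AU es_nonneg es_pos z])
  define c where "c = U\<^sup>T *\<^sub>v y"
  have cc: "c \<in> carrier_vec n" unfolding c_def using Um y by auto
  define t where "t = - (c $ 0) / (c0 $ 0)"
  define y' where "y' = y + t \<cdot>\<^sub>v z"
  have y': "y' \<in> carrier_vec n" unfolding y'_def using y z by auto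
  have cy': "U\<^sup>T *\<^sub>v y' = c + t \<cdot>\<^sub>v c0"
    unfolding y'_def c_def c0_def using Um y z
    by (simp add: mult_add_distrib_mat_vec[of _ n n] mult_mat_vec[of _ n n])
  have "n \<noteq> 0" using z by (intro notI, auto intro!: eq_vecI)
  hence c'0: "(c + t \<cdot>\<^sub>v c0) $ 0 = 0" using cc c0 c00 unfolding t_def by simp
  have "es ! 1 * (y' \<bullet> y') = (\<Sum>k<n. es ! 1 * ((c + t \<cdot>\<^sub>v c0) $ k)^2)"
    unfolding orthonormal_coords_norm[OF U y', symmetric] cy' by (simp add: sum_distrib_left)
  also have "\<dots> \<le> (\<Sum>k<n. es ! k * ((c + t \<cdot>\<^sub>v c0) $ k)^2)"
  proof (rule sum_mono)
    fix k assume "k \<in> {..<n}"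
    thus "es ! 1 * ((c + t \<cdot>\<^sub>v c0) $ k)^2 \<le> es ! k * ((c + t \<cdot>\<^sub>v c0) $ k)^2"
      using es_ge[of k] c'0 by (cases "k = 0", simp, intro mult_right_mono, auto)
  qed
  also have "\<dots> = y' \<bullet> (A *\<^sub>v y')"
    unfolding quadratic_form_orthonormal_diag[OF U AU y'] cy' ..
  finally show ?thesis unfolding y'_def eig_lambda_def es_def by auto
qed

section \<open>The quadratic form of the normalized signless Laplacian\<close>

lemma sum_lessThan_add: "(\<Sum>i<(m::nat) + n. f i) = (\<Sum>i<m. f i) + (\<Sum>j<n. f (m + j))"
  by (induct n) (auto simp: add.assoc)

lemma normalized_carrier: "(K :: real mat) \<in> carrier_mat n n \<Longrightarrow> normalized K \<in> carrier_mat n n"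
  unfolding normalized_def Let_def by (auto simp: mat_diag_def)

lemma normalized_index:
  assumes K: "(K :: real mat) \<in> carrier_mat n n" and i: "i < n" and j: "j < n"
  shows "normalized K $$ (i,j) = K $$ (i,j) / (sqrt (K $$ (i,i)) * sqrt (K $$ (j,j)))"
  using K i j unfolding normalized_def Let_def
  by (simp add: mat_diag_mult_left[OF K] mat_diag_mult_right[of _ n n])

lemma normalized_transpose:
  assumes K: "(K :: real mat) \<in> carrier_mat n n" and sym: "K\<^sup>T = K"
  shows "(normalized K)\<^sup>T = normalized K"
proof (rule eq_matI)
  fix i j assume "i < dim_row (normalized K)" "j < dim_col (normalized K)"
  hence ij: "i < n" "j < n" using normalized_carrier[OF K] by auto
  have "K $$ (j,i) = K $$ (i,j)" using arg_cong[OF sym, of "\<lambda>M. M $$ (i,j)"] ij K by simp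
  thus "(normalized K)\<^sup>T $$ (i,j) = normalized K $$ (i,j)"
    using ij normalized_carrier[OF K] by (simp add: normalized_index[OF K] mult.commute)
qed (insert normalized_carrier[OF K], auto)

lemma normalized_quadratic_form:
  fixes K :: "real mat" and w :: "nat \<Rightarrow> real"
  assumes K: "K \<in> carrier_mat n n" and pos: "\<And>i. i < n \<Longrightarrow> 0 < K $$ (i,i)"
  defines "y \<equiv> vec n (\<lambda>i. sqrt (K $$ (i,i)) * w i)"
  shows "y \<bullet> (normalized K *\<^sub>v y) = (\<Sum>i<n. \<Sum>j<n. w i * K $$ (i,j) * w j)"
proof -
  have "y \<bullet> (normalized K *\<^sub>v y) = (\<Sum>i<n. y $ i * (\<Sum>j<n. normalized K $$ (i,j) * y $ j))"
    using normalized_carrier[OF K] unfolding y_def by (simp add: scalar_prod_def lessThan_atLeast0)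
  also have "\<dots> = (\<Sum>i<n. \<Sum>j<n. w i * K $$ (i,j) * w j)"
    unfolding sum_distrib_left
  proof (intro sum.cong refl)
    fix i j assume "i \<in> {..<n}" "j \<in> {..<n}"
    hence ij: "i < n" "j < n" by auto
    have "sqrt (K $$ (i,i)) > 0" "sqrt (K $$ (j,j)) > 0" using pos ij by auto
    thus "y $ i * (normalized K $$ (i,j) * y $ j) = w i * K $$ (i,j) * w j"
      unfolding y_def normalized_index[OF K ij] using ij by (simp add: field_simps)
  qed
  finally show ?thesis .
qed

lemma signless_laplacian_carrier:
  "signless_laplacian r1 r2 P \<in> carrier_mat (r1 + r2) (r1 + r2)"
  unfolding signless_laplacian_def pair_mat_def by auto

lemma signless_laplacian_index:
  assumes "i < r1 + r2" "j < r1 + r2"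
  shows "signless_laplacian r1 r2 P $$ (i,j) =
    (if i < r1 then (if j < r1 then (if i = j then marg1 r2 P i else 0) else P i (j - r1))
     else (if j < r1 then P j (i - r1) else (if i = j then marg2 r1 P (i - r1) else 0)))"
  using assms unfolding signless_laplacian_def pair_mat_def by (simp add: mat_diag_def; arith)

lemma signless_laplacian_transpose: "(signless_laplacian r1 r2 P)\<^sup>T = signless_laplacian r1 r2 P"
  using signless_laplacian_carrier[of r1 r2 P]
  by (intro eq_matI) (auto simp: signless_laplacian_index)

lemma signless_laplacian_bilinear:
  "(\<Sum>i<r1 + r2. \<Sum>j<r1 + r2. w i * signless_laplacian r1 r2 P $$ (i,j) * w j)
    = (\<Sum>a<r1. \<Sum>b<r2. P a b * (w a + w (r1 + b))^2)"
proof -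
  let ?K = "signless_laplacian r1 r2 P"
  have "(\<Sum>i<r1 + r2. \<Sum>j<r1 + r2. w i * ?K $$ (i,j) * w j)
      = (\<Sum>a<r1. marg1 r2 P a * (w a)^2 + (\<Sum>b<r2. w a * P a b * w (r1+b)))
      + (\<Sum>b<r2. (\<Sum>a<r1. w (r1+b) * P a b * w a) + marg2 r1 P b * (w (r1+b))^2)"
    unfolding sum_lessThan_add
    by (intro arg_cong2[where f = "(+)"] sum.cong refl)
       (simp_all add: signless_laplacian_index mult_delta_left mult_delta_right power2_eq_square)
  also have "\<dots> = (\<Sum>a<r1. \<Sum>b<r2. P a b * (w a + w (r1 + b))^2)"
  proof -
    have e1: "(\<Sum>b<r2. \<Sum>a<r1. w (r1+b) * P a b * w a) = (\<Sum>a<r1. \<Sum>b<r2. w a * P a b * w (r1+b))"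
      by (subst sum.swap) (simp add: ac_simps)
    have e2: "(\<Sum>b<r2. marg2 r1 P b * (w (r1+b))^2) = (\<Sum>a<r1. \<Sum>b<r2. P a b * (w (r1+b))^2)"
      unfolding marg2_def sum_distrib_right by (rule sum.swap)
    have e3: "(\<Sum>a<r1. marg1 r2 P a * (w a)^2) = (\<Sum>a<r1. \<Sum>b<r2. P a b * (w a)^2)"
      unfolding marg1_def sum_distrib_right ..
    have "(\<Sum>a<r1. \<Sum>b<r2. P a b * (w a + w (r1+b))^2) = (\<Sum>a<r1. \<Sum>b<r2. P a b * (w a)^2
        + 2 * (w a * P a b * w (r1+b)) + P a b * (w (r1+b))^2)"
      by (intro sum.cong refl) (simp add: power2_eq_square algebra_simps)
    hence e4: "(\<Sum>a<r1. \<Sum>b<r2. P a b * (w a + w (r1+b))^2) = (\<Sum>a<r1. \<Sum>b<r2. P a b * (w a)^2)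
        + 2 * (\<Sum>a<r1. \<Sum>b<r2. w a * P a b * w (r1+b)) + (\<Sum>a<r1. \<Sum>b<r2. P a b * (w (r1+b))^2)"
      by (simp only: sum.distrib sum_distrib_left)
    show ?thesis unfolding sum.distrib e1 e2 e3 e4 by simp
  qed
  finally show ?thesis .
qed

definition scaled_pair_vec ::
  "nat \<Rightarrow> nat \<Rightarrow> (nat \<Rightarrow> nat \<Rightarrow> real) \<Rightarrow> (nat \<Rightarrow> real) \<Rightarrow> (nat \<Rightarrow> real) \<Rightarrow> real vec" where
  "scaled_pair_vec r1 r2 P u v = vec (r1 + r2) (\<lambda>i.
     sqrt (signless_laplacian r1 r2 P $$ (i,i)) * (if i < r1 then u i else v (i - r1)))"

context
  fixes r1 r2 :: nat and P :: "nat \<Rightarrow> nat \<Rightarrow> real"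
  assumes pos1: "\<forall>a<r1. 0 < marg1 r2 P a" and pos2: "\<forall>b<r2. 0 < marg2 r1 P b"
begin

lemma signless_laplacian_diag_pos: "i < r1 + r2 \<Longrightarrow> 0 < signless_laplacian r1 r2 P $$ (i,i)"
  using pos1 pos2 by (auto simp: signless_laplacian_index)

lemma scaled_pair_vec_quadratic_form:
  "scaled_pair_vec r1 r2 P u v \<bullet> (normalized (signless_laplacian r1 r2 P) *\<^sub>v scaled_pair_vec r1 r2 P u v)
    = expect r1 r2 P (\<lambda>a b. (u a + v b)^2)"
  unfolding scaled_pair_vec_def expect_def
  by (subst normalized_quadratic_form[OF signless_laplacian_carrier signless_laplacian_diag_pos])
     (simp_all add: signless_laplacian_bilinear)

lemma scaled_pair_vec_norm:
  "scaled_pair_vec r1 r2 P u v \<bullet> scaled_pair_vec r1 r2 P u v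
    = (\<Sum>a<r1. marg1 r2 P a * (u a)^2) + (\<Sum>b<r2. marg2 r1 P b * (v b)^2)"
proof -
  have "scaled_pair_vec r1 r2 P u v \<bullet> scaled_pair_vec r1 r2 P u v
      = (\<Sum>i<r1 + r2. signless_laplacian r1 r2 P $$ (i,i) * (if i < r1 then u i else v (i - r1))^2)"
    unfolding scaled_pair_vec_def scalar_prod_def lessThan_atLeast0[symmetric]
    using signless_laplacian_diag_pos
    by (intro sum.cong) (auto simp: power2_eq_square less_imp_le)
  also have "\<dots> = (\<Sum>a<r1. marg1 r2 P a * (u a)^2) + (\<Sum>b<r2. marg2 r1 P b * (v b)^2)"
    unfolding sum_lessThan_add by (simp add: signless_laplacian_index)
  finally show ?thesis .
qed

lemma scaled_pair_vec_surj:
  assumes "y \<in> carrier_vec (r1 + r2)"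
  shows "\<exists>u v. y = scaled_pair_vec r1 r2 P u v"
proof (intro exI eq_vecI)
  let ?d = "\<lambda>i. sqrt (signless_laplacian r1 r2 P $$ (i,i))"
  fix i assume "i < dim_vec (scaled_pair_vec r1 r2 P (\<lambda>a. y $ a / ?d a) (\<lambda>b. y $ (r1 + b) / ?d (r1 + b)))"
  hence "i < r1 + r2" unfolding scaled_pair_vec_def by simp
  with signless_laplacian_diag_pos[OF this]
  show "y $ i = scaled_pair_vec r1 r2 P (\<lambda>a. y $ a / ?d a) (\<lambda>b. y $ (r1 + b) / ?d (r1 + b)) $ i"
    unfolding scaled_pair_vec_def by auto
qed (insert assms, auto simp: scaled_pair_vec_def)

end

lemma scaled_pair_vec_shift:
  "scaled_pair_vec r1 r2 P (\<lambda>a. u a + t) (\<lambda>b. v b - t)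
    = scaled_pair_vec r1 r2 P u v + t \<cdot>\<^sub>v scaled_pair_vec r1 r2 P (\<lambda>_. 1) (\<lambda>_. -1)"
  unfolding scaled_pair_vec_def by (intro eq_vecI) (auto simp: algebra_simps)

context
  fixes r1 r2 :: nat and P :: "nat \<Rightarrow> nat \<Rightarrow> real"
  assumes P: "\<forall>a<r1. \<forall>b<r2. 0 \<le> P a b"
    and pos1: "\<forall>a<r1. 0 < marg1 r2 P a" and pos2: "\<forall>b<r2. 0 < marg2 r1 P b"
begin

lemma normalized_signless_laplacian_psd:
  assumes "y \<in> carrier_vec (r1 + r2)"
  shows "0 \<le> y \<bullet> (normalized (signless_laplacian r1 r2 P) *\<^sub>v y)"
proof -
  from scaled_pair_vec_surj[OF pos1 pos2 assms] obtain u v where "y = scaled_pair_vec r1 r2 P u v"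
    by blast
  thus ?thesis using P
    by (auto simp: scaled_pair_vec_quadratic_form[OF pos1 pos2] expect_def intro!: sum_nonneg)
qed

lemma eig_lambda2_normalized_signless_laplacian_nonneg:
  assumes "0 < r1" "0 < r2"
  shows "0 \<le> eig_lambda 2 (normalized (signless_laplacian r1 r2 P))"
  unfolding eig_lambda_def
  using symmetric_psd_eigs_asc_nonneg[OF normalized_carrier[OF signless_laplacian_carrier]
      normalized_transpose[OF signless_laplacian_carrier signless_laplacian_transpose]
      normalized_signless_laplacian_psd] assms
  by simp

lemma eig_lambda2_poincare:
  assumes "0 < r1"
  shows "\<exists>t. eig_lambda 2 (normalized (signless_laplacian r1 r2 P)) *
      ((\<Sum>a<r1. marg1 r2 P a * (u a + t)^2) + (\<Sum>b<r2. marg2 r1 P b * (v b - t)^2))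
    \<le> expect r1 r2 P (\<lambda>a b. (u a + v b)^2)"
proof -
  let ?A = "normalized (signless_laplacian r1 r2 P)"
  let ?z = "scaled_pair_vec r1 r2 P (\<lambda>_. 1) (\<lambda>_. -1)"
  have A: "?A \<in> carrier_mat (r1 + r2) (r1 + r2)"
    by (rule normalized_carrier[OF signless_laplacian_carrier])
  have z: "?z \<in> carrier_vec (r1 + r2)" unfolding scaled_pair_vec_def by simp
  have y: "scaled_pair_vec r1 r2 P u v \<in> carrier_vec (r1 + r2)" unfolding scaled_pair_vec_def by simp
  have "?z $ 0 \<noteq> 0"
    using assms signless_laplacian_diag_pos[OF pos1 pos2, of 0] unfolding scaled_pair_vec_def by simp
  hence z0: "?z \<noteq> 0\<^sub>v (r1 + r2)" using assms by auto
  have zAz: "?z \<bullet> (?A *\<^sub>v ?z) = 0"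
    unfolding scaled_pair_vec_quadratic_form[OF pos1 pos2] expect_def by simp
  obtain t where
    "eig_lambda 2 ?A * ((scaled_pair_vec r1 r2 P u v + t \<cdot>\<^sub>v ?z) \<bullet> (scaled_pair_vec r1 r2 P u v + t \<cdot>\<^sub>v ?z))
      \<le> (scaled_pair_vec r1 r2 P u v + t \<cdot>\<^sub>v ?z) \<bullet> (?A *\<^sub>v (scaled_pair_vec r1 r2 P u v + t \<cdot>\<^sub>v ?z))"
    using symmetric_psd_shift_eig_lambda2[OF A
        normalized_transpose[OF signless_laplacian_carrier signless_laplacian_transpose]
        normalized_signless_laplacian_psd z z0 zAz y]
    by blast
  thus ?thesis
    unfolding scaled_pair_vec_shift[symmetric] scaled_pair_vec_norm[OF pos1 pos2]
      scaled_pair_vec_quadratic_form[OF pos1 pos2]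
    by (intro exI[of _ t]) simp
qed

end

section \<open>From $P$ to $Q$\<close>

lemma expect_square_additive_le:
  assumes Q: "\<forall>a<r1. \<forall>b<r2. 0 \<le> Q a b"
    and M1: "\<And>a. a < r1 \<Longrightarrow> marg1 r2 Q a \<le> M * marg1 r2 P a"
    and M2: "\<And>b. b < r2 \<Longrightarrow> marg2 r1 Q b \<le> M * marg2 r1 P b"
  shows "expect r1 r2 Q (\<lambda>a b. (u a + v b)^2)
    \<le> 2 * M * ((\<Sum>a<r1. marg1 r2 P a * (u a)^2) + (\<Sum>b<r2. marg2 r1 P b * (v b)^2))"
proof -
  have "expect r1 r2 Q (\<lambda>a b. (u a + v b)^2)
      \<le> (\<Sum>a<r1. \<Sum>b<r2. 2 * (Q a b * (u a)^2) + 2 * (Q a b * (v b)^2))"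
    unfolding expect_def
  proof (intro sum_mono)
    fix a b assume "a \<in> {..<r1}" "b \<in> {..<r2}"
    hence "0 \<le> Q a b" using Q by auto
    moreover have "(u a + v b)^2 \<le> 2 * (u a)^2 + 2 * (v b)^2"
      using zero_le_power2[of "u a - v b"] by (simp add: power2_eq_square algebra_simps)
    ultimately show "Q a b * (u a + v b)^2 \<le> 2 * (Q a b * (u a)^2) + 2 * (Q a b * (v b)^2)"
      by (metis distrib_left mult.left_commute mult_left_mono)
  qed
  also have "\<dots> = 2 * (\<Sum>a<r1. marg1 r2 Q a * (u a)^2) + 2 * (\<Sum>b<r2. marg2 r1 Q b * (v b)^2)"
    unfolding marg1_def marg2_def
    by (simp add: sum.distrib sum_distrib_left sum_distrib_right, subst (2) sum.swap, simp)
  also have "\<dots> \<le> 2 * (\<Sum>a<r1. M * marg1 r2 P a * (u a)^2) + 2 * (\<Sum>b<r2. M * marg2 r1 P b * (v b)^2)"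
    using M1 M2 by (intro add_mono mult_left_mono sum_mono mult_right_mono) auto
  also have "\<dots> = 2 * M * ((\<Sum>a<r1. marg1 r2 P a * (u a)^2) + (\<Sum>b<r2. marg2 r1 P b * (v b)^2))"
    by (simp add: sum_distrib_left algebra_simps)
  finally show ?thesis .
qed

lemma eratio_le_ereal_divide:
  assumes "0 \<le> q" "0 \<le> p" "0 < l" "0 \<le> c" "l * q \<le> c * p"
  shows "eratio q p \<le> ereal (c / l)"
proof (cases "p = 0")
  case True
  hence "q = 0" using assms by (simp add: mult_le_0_iff)
  thus ?thesis using True assms unfolding eratio_def by simp
next
  case False
  hence "q / p \<le> c / l" using assms by (simp add: divide_le_eq field_simps)
  thus ?thesis using False unfolding eratio_def by simp
qed

lemma Max_marginal_ratios:
  fixes r1 r2 :: nat and P Q :: "nat \<Rightarrow> nat \<Rightarrow> real"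
  defines "M \<equiv> Max ((\<lambda>t. marg1 r2 Q t / marg1 r2 P t) ` {..<r1}
                      \<union> (\<lambda>t. marg2 r1 Q t / marg2 r1 P t) ` {..<r2})"
  assumes Q: "\<forall>a<r1. \<forall>b<r2. 0 \<le> Q a b" and pos1: "\<forall>a<r1. 0 < marg1 r2 P a"
    and pos2: "\<forall>b<r2. 0 < marg2 r1 P b" and "0 < r1"
  shows "\<And>a. a < r1 \<Longrightarrow> marg1 r2 Q a \<le> M * marg1 r2 P a"
    and "\<And>b. b < r2 \<Longrightarrow> marg2 r1 Q b \<le> M * marg2 r1 P b"
    and "0 \<le> M"
proof -
  show M1: "marg1 r2 Q a \<le> M * marg1 r2 P a" if "a < r1" for a
  proof -
    have "marg1 r2 Q a / marg1 r2 P a \<le> M" unfolding M_def using that by (intro Max_ge) auto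
    thus ?thesis using pos1 that by (simp add: pos_divide_le_eq)
  qed
  show "marg2 r1 Q b \<le> M * marg2 r1 P b" if "b < r2" for b
  proof -
    have "marg2 r1 Q b / marg2 r1 P b \<le> M" unfolding M_def using that by (intro Max_ge) auto
    thus ?thesis using pos2 that by (simp add: pos_divide_le_eq)
  qed
  have "0 \<le> marg1 r2 Q 0" using Q \<open>0 < r1\<close> unfolding marg1_def by (auto intro: sum_nonneg)
  with M1[OF \<open>0 < r1\<close>] have "0 \<le> M * marg1 r2 P 0" by linarith
  moreover have "0 < marg1 r2 P 0" using pos1 \<open>0 < r1\<close> by simp
  ultimately show "0 \<le> M" by (auto simp: zero_le_mult_iff)
qed

context
  fixes r1 r2 :: nat and P :: "nat \<Rightarrow> nat \<Rightarrow> real"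
  assumes P: "\<forall>a<r1. \<forall>b<r2. 0 \<le> P a b"
    and pos1: "\<forall>a<r1. 0 < marg1 r2 P a" and pos2: "\<forall>b<r2. 0 < marg2 r1 P b"
begin

lemma eig_lambda2_expect_transfer:
  assumes r: "0 < r1" "0 < r2" and Q: "\<forall>a<r1. \<forall>b<r2. 0 \<le> Q a b" and "0 \<le> M"
    and M1: "\<And>a. a < r1 \<Longrightarrow> marg1 r2 Q a \<le> M * marg1 r2 P a"
    and M2: "\<And>b. b < r2 \<Longrightarrow> marg2 r1 Q b \<le> M * marg2 r1 P b"
  shows "eig_lambda 2 (normalized (signless_laplacian r1 r2 P)) * expect r1 r2 Q (\<lambda>a b. (u a + v b)^2)
    \<le> 2 * M * expect r1 r2 P (\<lambda>a b. (u a + v b)^2)"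
proof -
  let ?l = "eig_lambda 2 (normalized (signless_laplacian r1 r2 P))"
  let ?N = "\<lambda>t. (\<Sum>a<r1. marg1 r2 P a * (u a + t)^2) + (\<Sum>b<r2. marg2 r1 P b * (v b - t)^2)"
  obtain t where t: "?l * ?N t \<le> expect r1 r2 P (\<lambda>a b. (u a + v b)^2)"
    using eig_lambda2_poincare[OF P pos1 pos2 r(1)] by blast
  have l: "0 \<le> ?l" by (rule eig_lambda2_normalized_signless_laplacian_nonneg[OF P pos1 pos2 r])
  have "expect r1 r2 Q (\<lambda>a b. (u a + v b)^2) = expect r1 r2 Q (\<lambda>a b. ((u a + t) + (v b - t))^2)"
    by simp
  also have "\<dots> \<le> 2 * M * ?N t"
    by (rule expect_square_additive_le[OF Q M1 M2])
  finally have "?l * expect r1 r2 Q (\<lambda>a b. (u a + v b)^2) \<le> ?l * (2 * M * ?N t)"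
    using l by (rule mult_left_mono)
  also have "\<dots> = 2 * M * (?l * ?N t)" by (simp only: mult_ac)
  also have "\<dots> \<le> 2 * M * expect r1 r2 P (\<lambda>a b. (u a + v b)^2)"
    using t \<open>0 \<le> M\<close> by (simp add: mult_left_mono)
  finally show ?thesis .
qed

lemma tau_additive_class_le:
  assumes r: "0 < r1" "0 < r2" and Q: "\<forall>a<r1. \<forall>b<r2. 0 \<le> Q a b" and "0 \<le> M"
    and M1: "\<And>a. a < r1 \<Longrightarrow> marg1 r2 Q a \<le> M * marg1 r2 P a"
    and M2: "\<And>b. b < r2 \<Longrightarrow> marg2 r1 Q b \<le> M * marg2 r1 P b"
    and l: "0 < eig_lambda 2 (normalized (signless_laplacian r1 r2 P))"
  shows "tau r1 r2 P Q additive_class \<le> ereal (2 * M / eig_lambda 2 (normalized (signless_laplacian r1 r2 P)))"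
  unfolding tau_def
proof (rule SUP_least)
  fix fg assume "fg \<in> additive_class \<times> additive_class"
  then obtain f1 f2 g1 g2 where "fst fg = (\<lambda>a b. f1 a + f2 b)" "snd fg = (\<lambda>a b. g1 a + g2 b)"
    unfolding additive_class_def by auto
  hence fg: "(\<lambda>a b. (fst fg a b - snd fg a b)^2) = (\<lambda>a b. ((f1 a - g1 a) + (f2 b - g2 b))^2)"
    by (simp add: algebra_simps)
  show "eratio (expect r1 r2 Q (\<lambda>a b. (fst fg a b - snd fg a b)^2))
      (expect r1 r2 P (\<lambda>a b. (fst fg a b - snd fg a b)^2))
    \<le> ereal (2 * M / eig_lambda 2 (normalized (signless_laplacian r1 r2 P)))"
    unfolding fg using P Q l \<open>0 \<le> M\<close> eig_lambda2_expect_transfer[OF r Q \<open>0 \<le> M\<close> M1 M2]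
    by (intro eratio_le_ereal_divide) (auto simp: expect_def intro!: sum_nonneg)
qed

end

theorem mainTheorem2:
  fixes r1 r2 :: nat and P Q :: "nat \<Rightarrow> nat \<Rightarrow> real"
  assumes "is_pair_dist r1 r2 P" and "is_pair_dist r1 r2 Q"
    and "\<forall>t<r1. marg1 r2 P t > 0" and "\<forall>t<r2. marg2 r1 P t > 0"
  shows "tau r1 r2 P Q additive_class \<le>
    (let l2 = eig_lambda 2 (normalized (signless_laplacian r1 r2 P));
         M = Max ((\<lambda>t. marg1 r2 Q t / marg1 r2 P t) ` {..<r1}
                \<union> (\<lambda>t. marg2 r1 Q t / marg2 r1 P t) ` {..<r2})
     in if l2 = 0 then \<infinity> else ereal (2 / l2 * M))"
proof -
  have P: "\<forall>a<r1. \<forall>b<r2. 0 \<le> P a b" and Q: "\<forall>a<r1. \<forall>b<r2. 0 \<le> Q a b"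
    using assms(1,2) unfolding is_pair_dist_def by auto
  have r: "0 < r1" "0 < r2" using assms(1) unfolding is_pair_dist_def by (auto intro!: gr0I)
  define l2 where "l2 = eig_lambda 2 (normalized (signless_laplacian r1 r2 P))"
  define M where "M = Max ((\<lambda>t. marg1 r2 Q t / marg1 r2 P t) ` {..<r1}
                \<union> (\<lambda>t. marg2 r1 Q t / marg2 r1 P t) ` {..<r2})"
  note M = Max_marginal_ratios[OF Q assms(3,4) r(1), folded M_def]
  show ?thesis
  proof (cases "l2 = 0")
    case False
    with eig_lambda2_normalized_signless_laplacian_nonneg[OF P assms(3,4) r]
    have "0 < l2" unfolding l2_def by simp
    from tau_additive_class_le[OF P assms(3,4) r Q M(3) M(1,2) this[unfolded l2_def]]
    show ?thesis using False unfolding Let_def l2_def[symmetric] M_def[symmetric]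
      by (simp add: mult.commute)
  qed (simp add: l2_def)
qed

end
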